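(* Let $m\ge n$, $B\in\mathbb R^{n\times m}$ of full row rank, $f,h$ convex and continuously differentiable with Lipschitz gradients, $\mathcal L(u,p)=f(u)-h(p)+(Bu,p)$ with saddle point $(u^*,p^* )$, and $\mathcal I_{\mathcal V},\mathcal I_{\mathcal Q}$ symmetric positive definite. Suppose $f\in\mathcal S^{1,1}_{\mu_{f,\mathcal I_{\mathcal V}},L_{f,\mathcal I_{\mathcal V}}}$ w.r.t. $\mathcal I_{\mathcal V}$ with $0<\mu_{f,\mathcal I_{\mathcal V}}\le L_{f,\mathcal I_{\mathcal V}}<2$. Let $(u_k,p_k)$ be generated from $(u_0,p_0)$ by the implicit-explicit (IMEX) scheme $$u_{k+1/2}=u_k-\mathcal I_{\mathcal V}^{-1}(\nabla f(u_k)+B^\top p_k),\qquad p_{k+1}=p_k-\alpha_k\mathcal I_{\mathcal Q}^{-1}(\nabla h(p_k)-Bu_{k+1/2}),$$ $$u_{k+1}=\arg\min_{u\in\mathbb R^m} f(u)+\frac1{2\alpha_k}\|u-u_k+\alpha_k\mathcal I_{\mathcal V}^{-1}B^\top p_{k+1}\|^2_{\mathcal I_{\mathcal V}}.$$ Then for $0<\alpha_k<\mu_{\mathcal Q}/L_{S,\mathcal Q}^2$, $$\mathcal E(u_{k+1},p_{k+1})\le\frac{1}{1+\alpha_k\mu_k}\mathcal E(u_k,p_k),\qquad \mu_k=\min\{\mu_{\mathcal V},\ \mu_{\mathcal Q}-\alpha_kL_{S,\mathcal Q}^2\}.$$ In particular, for $\alpha_k=0.5\mu_{\mathcal Q}/L_{S,\mathcal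 Q}^2$, $$\mathcal E(u_{k+1},p_{k+1})\le\frac{1}{1+0.5\,\mu_{\mathcal Q}\min\{\mu_{\mathcal V},\mu_{\mathcal Q}/2\}/L_{S,\mathcal Q}^2}\mathcal E(u_k,p_k).$$
   Context: For SPD $M$, $\|x\|_M=(Mx,x)^{1/2}$; $D_g(y,x)=g(y)-g(x)-(\nabla g(x),y-x)$; $g\in\mathcal S^{1,1}_{\mu_{g,M},L_{g,M}}$ w.r.t. $M$ means $\frac{\mu_{g,M}}2\|x-y\|_M^2\le D_g(y,x)\le\frac{L_{g,M}}2\|x-y\|_M^2$ for all $x,y$. A saddle point satisfies $\nabla f(u^* )+B^\top p^*=0$, $Bu^*=\nabla h(p^* )$. Define $e(u)=u-\mathcal I_{\mathcal V}^{-1}\nabla f(u)$, $h_B(p)=h(p)+\frac12(B\mathcal I_{\mathcal V}^{-1}B^\top p,p)$, $\mathcal E(u,p)=\frac12\|u-u^*\|^2_{\mathcal I_{\mathcal V}}+\frac12\|p-p^*\|^2_{\mathcal I_{\mathcal Q}}$. Let $L_{e,\mathcal I_{\mathcal V}}$ be the Lipschitz constant of $e$ in $\|\cdot\|_{\mathcal I_{\mathcal V}}$, $\mu_{h_B,\mathcal I_{\mathcal Q}},L_{h_B,\mathcal I_{\mathcal Q}}$ the convexity and smoothness constants of $h_B$ w.r.t. $\mathcal I_{\mathcal Q}$, $L_S^2=\lambda_{\max}(\mathcal I_{\mathcal Q}^{-1}B\mathcal I_{\mathcal V}^{-1}B^\top)$. Constants: $\mu_{\mathcal V}=\mu_{f,\mathcal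 I_{\mathcal V}}$, $\mu_{\mathcal Q}=(2-L_{f,\mathcal I_{\mathcal V}})\mu_{h_B,\mathcal I_{\mathcal Q}}$, $L_{S,\mathcal Q}^2=L_{h_B,\mathcal I_{\mathcal Q}}^2+L_{e,\mathcal I_{\mathcal V}}^2L_S^2$. *)

theory Defs
  imports "HOL-Analysis.Analysis"
begin

definition mnorm2 :: "real^'a^'a \<Rightarrow> real^'a \<Rightarrow> real" where
  "mnorm2 M x = (M *v x) \<bullet> x"

definition mnorm :: "real^'a^'a \<Rightarrow> real^'a \<Rightarrow> real" where
  "mnorm M x = sqrt (mnorm2 M x)"

definition spd :: "real^'a^'a \<Rightarrow> bool" where
  "spd M \<longleftrightarrow> transpose M = M \<and> (\<forall>x. x \<noteq> 0 \<longrightarrow> mnorm2 M x > 0)"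

definition bregman :: "(real^'a \<Rightarrow> real) \<Rightarrow> (real^'a \<Rightarrow> real^'a) \<Rightarrow> real^'a \<Rightarrow> real^'a \<Rightarrow> real" where
  "bregman g dg y x = g y - g x - dg x \<bullet> (y - x)"

definition S11 :: "(real^'a \<Rightarrow> real) \<Rightarrow> (real^'a \<Rightarrow> real^'a) \<Rightarrow> real \<Rightarrow> real \<Rightarrow> real^'a^'a \<Rightarrow> bool" where
  "S11 g dg mu L M \<longleftrightarrow> (\<forall>x y. mu / 2 * mnorm2 M (x - y) \<le> bregman g dg y x
                                \<and> bregman g dg y x \<le> L / 2 * mnorm2 M (x - y))"

definition is_gradient :: "(real^'a \<Rightarrow> real) \<Rightarrow> (real^'a \<Rightarrow> real^'a) \<Rightarrow> bool" where
  "is_gradient g dg \<longleftrightarrow> (\<forall>x. (g has_derivative (\<lambda>v. dg x \<bullet> v)) (at x))"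

definition lipschitz_grad :: "(real^'a \<Rightarrow> real^'a) \<Rightarrow> bool" where
  "lipschitz_grad dg \<longleftrightarrow> (\<exists>L. \<forall>x y. norm (dg x - dg y) \<le> L * norm (x - y))"

definition lambda_max :: "real^'a^'a \<Rightarrow> real" where
  "lambda_max A = Max {c. \<exists>v. v \<noteq> 0 \<and> A *v v = c *\<^sub>R v}"

end

theory Submission
  imports Defs
begin

text \<open>The IMEX step is analysed through the energy
  E(u, p) = 1/2 |u - u*|^2_IV + 1/2 |p - p*|^2_IQ.
  Both updates become residual equations, and with the saddle-point conditions the change of E
  splits into a primal pairing for grad f, a dual pairing for grad h_B, two perturbations caused by
  evaluating the p-step at the old iterate, and minus half the squared step lengths.
  Strong monotonicity and cocoercivity of grad f bound the primal pairing from below by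
  mu_f/2 |u - u*|^2 up to a loss L_f/2 |B^T (p - p*)|^2 in the IV^-1 norm; as L_f < 2 the Schur
  complement part of h_B and the convexity of h absorb this loss and still leave mu_Q/2 |p - p*|^2.
  Young's inequality, with the Lipschitz bounds for grad h_B and e and the generalised eigenvalue
  bound L_S^2 for B IV^-1 B^T relative to IQ, trades the perturbations against the squared step
  lengths at the price of alpha^2 L_SQ^2/2 |p - p*|^2.  Altogether
  E_{k+1} (1 + alpha min(mu_V, mu_Q - alpha L_SQ^2)) <= E_k.\<close>

section \<open>Symmetric positive definite matrices\<close>

lemma inner_matrix_vector_transpose:
  "((A::real^'n^'m) *v x) \<bullet> y = x \<bullet> (transpose A *v y)"
  by (metis dot_lmul_matrix inner_commute transpose_matrix_vector)

lemma matrix_vector_mult_uminus: "(A::real^'n^'m) *v (- x) = - (A *v x)"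
  by (rule linear_neg[OF matrix_vector_mul_linear])

lemma mnorm2_minus_commute: "mnorm2 M (x - y) = mnorm2 M (y - x)"
proof -
  have "x - y = - (y - x)" by simp
  then show ?thesis
    by (simp only: mnorm2_def matrix_vector_mult_uminus inner_minus_left inner_minus_right minus_minus)
qed

lemma mnorm2_scaleR: "mnorm2 M (c *\<^sub>R x) = c\<^sup>2 * mnorm2 M x"
  unfolding mnorm2_def by (simp add: matrix_vector_mult_scaleR power2_eq_square)

lemma spd_symmetric: "spd M \<Longrightarrow> (M *v x) \<bullet> y = x \<bullet> (M *v y)"
  unfolding spd_def by (metis inner_matrix_vector_transpose)

lemma spd_mnorm2_pos: "spd M \<Longrightarrow> x \<noteq> 0 \<Longrightarrow> 0 < mnorm2 M x"
  unfolding spd_def by blast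

lemma spd_mnorm2_nonneg: "spd M \<Longrightarrow> 0 \<le> mnorm2 M x"
  by (cases "x = 0") (auto simp: mnorm2_def dest: spd_mnorm2_pos[of M x])

lemma spd_mnorm2_le_zero_iff: "spd M \<Longrightarrow> mnorm2 M x \<le> 0 \<longleftrightarrow> x = 0"
  using spd_mnorm2_pos[of M x] by (cases "x = 0") (auto simp: mnorm2_def)

lemma spd_invertible:
  assumes "spd M" shows "invertible M"
proof -
  have "\<forall>x. M *v x = 0 \<longrightarrow> x = 0"
    using spd_mnorm2_pos[OF assms] by (fastforce simp: mnorm2_def)
  then show ?thesis
    using matrix_left_invertible_ker invertible_left_inverse by blast
qed

lemma spd_matrix_inv:
  assumes "spd M"
  shows "M ** matrix_inv M = mat 1" and "matrix_inv M ** M = mat 1"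
  using spd_invertible[OF assms] invertible_def someI_ex[of "\<lambda>A'. M ** A' = mat 1 \<and> A' ** M = mat 1"]
  unfolding matrix_inv_def by auto

lemma spd_matrix_inv_cancel:
  assumes "spd M"
  shows "M *v (matrix_inv M *v z) = z" and "matrix_inv M *v (M *v z) = z"
  by (simp_all add: matrix_vector_mul_assoc spd_matrix_inv[OF assms])

lemma spd_transpose_matrix_inv:
  assumes "spd M" shows "transpose (matrix_inv M) = matrix_inv M"
proof -
  have TM: "transpose (matrix_inv M) ** M = mat 1"
    using spd_matrix_inv(1)[OF assms] assms unfolding spd_def
    by (metis matrix_transpose_mul transpose_mat)
  have "transpose (matrix_inv M) = transpose (matrix_inv M) ** (M ** matrix_inv M)"
    by (simp add: spd_matrix_inv(1)[OF assms] matrix_mul_rid)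
  also have "\<dots> = matrix_inv M"
    by (simp add: matrix_mul_assoc TM matrix_mul_lid)
  finally show ?thesis .
qed

lemma mnorm2_matrix_inv_mult:
  assumes "spd M" shows "mnorm2 (matrix_inv M) (M *v x) = mnorm2 M x"
  unfolding mnorm2_def spd_matrix_inv_cancel[OF assms] by (simp add: inner_commute)

lemma spd_inverse:
  assumes "spd M" shows "spd (matrix_inv M)"
proof -
  have "0 < mnorm2 (matrix_inv M) x" if "x \<noteq> 0" for x
  proof -
    have "matrix_inv M *v x \<noteq> 0"
      using spd_matrix_inv_cancel(1)[OF assms, of x] that by auto
    then have "0 < mnorm2 M (matrix_inv M *v x)"
      by (rule spd_mnorm2_pos[OF assms])
    then show ?thesis
      using mnorm2_matrix_inv_mult[OF assms, of "matrix_inv M *v x"]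
      by (simp add: spd_matrix_inv_cancel[OF assms])
  qed
  then show ?thesis
    unfolding spd_def using spd_transpose_matrix_inv[OF assms] by auto
qed

lemma mnorm2_matrix_inv_cancel:
  assumes "spd M" shows "mnorm2 M (matrix_inv M *v z) = mnorm2 (matrix_inv M) z"
  using mnorm2_matrix_inv_mult[OF assms, of "matrix_inv M *v z"]
  by (simp add: spd_matrix_inv_cancel[OF assms])

lemma mnorm2_three_point:
  assumes "spd M"
  shows "mnorm2 M x - mnorm2 M (x - d) = 2 * ((M *v d) \<bullet> x) - mnorm2 M d"
proof -
  have "(M *v x) \<bullet> d = (M *v d) \<bullet> x"
    using spd_symmetric[OF assms, of x d] by (simp add: inner_commute)
  then show ?thesis
    unfolding mnorm2_def by (simp add: matrix_vector_mult_diff_distrib inner_diff_left inner_diff_right)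
qed

lemma spd_young:
  assumes "spd M"
  shows "2 * t * ((M *v x) \<bullet> y) \<le> mnorm2 M x + t\<^sup>2 * mnorm2 M y"
proof -
  have "0 \<le> mnorm2 M (x - t *\<^sub>R y)" by (rule spd_mnorm2_nonneg[OF assms])
  also have "\<dots> = mnorm2 M x - 2 * t * ((M *v x) \<bullet> y) + t\<^sup>2 * mnorm2 M y"
  proof -
    have "(M *v y) \<bullet> x = (M *v x) \<bullet> y"
      using spd_symmetric[OF assms, of y x] by (simp add: inner_commute)
    then show ?thesis
      unfolding mnorm2_def
      by (simp add: matrix_vector_mult_diff_distrib matrix_vector_mult_scaleR inner_diff_left
          inner_diff_right power2_eq_square algebra_simps)
  qed
  finally show ?thesis by linarith
qed

lemma spd_dual_young:
  assumes "spd M"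
  shows "2 * t * (z \<bullet> y) \<le> mnorm2 (matrix_inv M) z + t\<^sup>2 * mnorm2 M y"
  using spd_young[OF assms, of t "matrix_inv M *v z" y]
  unfolding spd_matrix_inv_cancel(1)[OF assms] mnorm2_matrix_inv_cancel[OF assms] .

lemma congruence_form_eq:
  "((B ** A ** transpose B) *v q) \<bullet> q = mnorm2 A (transpose B *v q)"
  for A :: "real^'m^'m" and B :: "real^'m^'n"
  unfolding mnorm2_def by (simp add: inner_matrix_vector_transpose flip: matrix_vector_mul_assoc)

lemma dual_pairing_le_of_dual_bound:
  assumes Q: "spd Q" and a: "0 < a" and K: "0 \<le> K" and D: "0 \<le> D"
    and z: "mnorm2 (matrix_inv Q) z \<le> K * D"
  shows "a * (z \<bullet> y) \<le> D/2 + a\<^sup>2 * K/2 * mnorm2 Q y"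
proof (cases "K = 0")
  case True
  then have "z = 0"
    using z spd_mnorm2_le_zero_iff[OF spd_inverse[OF Q]] by simp
  then show ?thesis
    using D K spd_mnorm2_nonneg[OF Q, of y] by simp
next
  case False
  have "2 * (a * K) * (z \<bullet> y) \<le> mnorm2 (matrix_inv Q) z + (a * K)\<^sup>2 * mnorm2 Q y"
    by (rule spd_dual_young[OF Q])
  also have "\<dots> \<le> K * (D + a\<^sup>2 * K * mnorm2 Q y)"
    using z by (simp add: algebra_simps power2_eq_square)
  finally have "K * (2 * (a * (z \<bullet> y))) \<le> K * (D + a\<^sup>2 * K * mnorm2 Q y)"
    by (simp add: algebra_simps)
  then show ?thesis
    using K False by simp
qed

section \<open>Convex functions and the class S11\<close>

lemma bregman_symmetrized: "bregman g dg y x + bregman g dg x y = (dg y - dg x) \<bullet> (y - x)"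
  unfolding bregman_def by (simp add: algebra_simps inner_diff_left inner_diff_right)

lemma S11_strongly_monotone:
  assumes "S11 g dg mu L M"
  shows "mu * mnorm2 M (y - x) \<le> (dg y - dg x) \<bullet> (y - x)"
proof -
  have "mu/2 * mnorm2 M (x - y) \<le> bregman g dg y x" "mu/2 * mnorm2 M (y - x) \<le> bregman g dg x y"
    using assms unfolding S11_def by blast+
  moreover have "mu * mnorm2 M (y - x) = mu/2 * mnorm2 M (x - y) + mu/2 * mnorm2 M (y - x)"
    using mnorm2_minus_commute[of M x y] by simp
  ultimately show ?thesis
    using bregman_symmetrized[of g dg y x] by linarith
qed

lemma S11_mu_le_L:
  assumes "S11 g dg mu L M" "spd M"
  shows "mu \<le> L"
proof -
  obtain x :: "real^'a" where "x \<noteq> 0"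
    using axis_eq_0_iff[of _ "1::real"] by blast
  then have "0 < mnorm2 M (x - 0)"
    using spd_mnorm2_pos[OF assms(2)] by simp
  moreover have "mu/2 * mnorm2 M (x - 0) \<le> L/2 * mnorm2 M (x - 0)"
    using assms(1) unfolding S11_def by (meson order_trans)
  ultimately show ?thesis by simp
qed

text \<open>Evaluating the upper quadratic bound at the preconditioned gradient step
  z = y - (1/L) M^-1 (dg y - dg x) turns it into a lower bound for the Bregman divergence.\<close>
lemma S11_bregman_ge_dual:
  assumes "S11 g dg mu L M" "spd M" "0 \<le> mu" "0 < L"
  shows "mnorm2 (matrix_inv M) (dg y - dg x) / (2 * L) \<le> bregman g dg y x"
proof -
  define r where "r = dg y - dg x"
  define z where "z = y - (1/L) *\<^sub>R (matrix_inv M *v r)"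
  have "0 \<le> bregman g dg z x"
    using assms(1,3) spd_mnorm2_nonneg[OF assms(2), of "x - z"] unfolding S11_def
    by (meson mult_nonneg_nonneg order_trans zero_le_divide_iff zero_le_numeral)
  moreover have "bregman g dg z y \<le> L/2 * mnorm2 M (y - z)"
    using assms(1) unfolding S11_def by blast
  moreover have "mnorm2 M (y - z) = mnorm2 (matrix_inv M) r / L\<^sup>2"
    unfolding z_def by (simp add: mnorm2_scaleR mnorm2_matrix_inv_cancel[OF assms(2)] power_divide)
  moreover have "bregman g dg z x = bregman g dg y x + bregman g dg z y + r \<bullet> (z - y)"
    unfolding bregman_def r_def by (simp add: algebra_simps inner_diff_left inner_diff_right)
  moreover have "r \<bullet> (z - y) = - mnorm2 (matrix_inv M) r / L"
    unfolding z_def mnorm2_def by (simp add: inner_commute)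
  ultimately show ?thesis
    using assms(4) unfolding r_def by (simp add: field_simps power2_eq_square)
qed

lemma S11_cocoercive:
  assumes "S11 g dg mu L M" "spd M" "0 \<le> mu" "0 < L"
  shows "mnorm2 (matrix_inv M) (dg y - dg x) / L \<le> (dg y - dg x) \<bullet> (y - x)"
proof -
  have "mnorm2 (matrix_inv M) (dg x - dg y) = mnorm2 (matrix_inv M) (dg y - dg x)"
    by (rule mnorm2_minus_commute)
  then show ?thesis
    using S11_bregman_ge_dual[OF assms, of y x] S11_bregman_ge_dual[OF assms, of x y]
      bregman_symmetrized[of g dg y x] by (simp add: field_simps)
qed

lemma S11_lipschitz_dual:
  assumes "S11 g dg mu L M" "spd M" "0 \<le> mu" "0 < L"
  shows "mnorm2 (matrix_inv M) (dg y - dg x) \<le> L\<^sup>2 * mnorm2 M (y - x)"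
proof -
  have "2 * mnorm2 (matrix_inv M) (dg y - dg x) \<le> 2 * L * ((dg y - dg x) \<bullet> (y - x))"
    using S11_cocoercive[OF assms, of y x] assms(4) by (simp add: field_simps)
  also have "\<dots> \<le> mnorm2 (matrix_inv M) (dg y - dg x) + L\<^sup>2 * mnorm2 M (y - x)"
    by (rule spd_dual_young[OF assms(2)])
  finally show ?thesis by simp
qed

text \<open>Half of the strong monotonicity and half of the cocoercivity pay for a cross term
  with an arbitrary dual vector z.\<close>
lemma S11_perturbed_monotone:
  assumes "S11 g dg mu L M" "spd M" "0 \<le> mu" "0 < L"
  shows "mu/2 * mnorm2 M (y - x) - L/2 * mnorm2 (matrix_inv M) z
           \<le> (dg y - dg x) \<bullet> (y - x) + (matrix_inv M *v (dg y - dg x)) \<bullet> z"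
proof -
  define r where "r = dg y - dg x"
  have "2 * L * ((matrix_inv M *v r) \<bullet> (- z)) \<le> mnorm2 (matrix_inv M) r + L\<^sup>2 * mnorm2 (matrix_inv M) (- z)"
    by (rule spd_young[OF spd_inverse[OF assms(2)]])
  moreover have "mnorm2 (matrix_inv M) (- z) = mnorm2 (matrix_inv M) z"
    using mnorm2_minus_commute[of "matrix_inv M" 0 z] by simp
  ultimately have "- ((matrix_inv M *v r) \<bullet> z) \<le> mnorm2 (matrix_inv M) r / (2 * L) + L/2 * mnorm2 (matrix_inv M) z"
    using assms(4) by (simp add: field_simps power2_eq_square)
  then show ?thesis
    using S11_strongly_monotone[OF assms(1), of y x] S11_cocoercive[OF assms, of y x]
    unfolding r_def by (simp add: field_simps)
qed

lemma convex_on_gradient_ineq: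
  fixes f :: "real^'n \<Rightarrow> real"
  assumes cv: "convex_on UNIV f" and grad: "is_gradient f gf"
  shows "f x + gf x \<bullet> (y - x) \<le> f y"
proof -
  define g where "g t = f (x + t *\<^sub>R (y - x))" for t :: real
  have "convex_on UNIV g"
  proof (rule convex_onI)
    fix s t u :: real
    have "x + ((1 - u) * s + u * t) *\<^sub>R (y - x)
        = (1 - u) *\<^sub>R (x + s *\<^sub>R (y - x)) + u *\<^sub>R (x + t *\<^sub>R (y - x))"
      by (simp add: algebra_simps)
    moreover assume "0 < u" "u < 1"
    ultimately show "g ((1 - u) *\<^sub>R s + u *\<^sub>R t) \<le> (1 - u) * g s + u * g t"
      unfolding g_def using convex_onD[OF cv, of u] by simp
  qed simp
  have "((\<lambda>t::real. x + t *\<^sub>R (y - x)) has_derivative (\<lambda>t. t *\<^sub>R (y - x))) (at 0)"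
    by (auto intro!: derivative_eq_intros)
  then have "(g has_derivative (\<lambda>t. gf x \<bullet> (t *\<^sub>R (y - x)))) (at 0)"
    unfolding g_def using has_derivative_compose grad unfolding is_gradient_def
    by (metis (no_types) add_0_right scale_zero_left)
  then have "(g has_field_derivative (gf x \<bullet> (y - x))) (at 0)"
    by (auto intro: has_derivative_imp_has_field_derivative)
  from convex_on_imp_above_tangent[OF \<open>convex_on UNIV g\<close> connected_UNIV _ _ this, of 1]
  show ?thesis unfolding g_def by simp
qed

lemma convex_on_gradient_monotone:
  fixes f :: "real^'n \<Rightarrow> real"
  assumes "convex_on UNIV f" "is_gradient f gf"
  shows "0 \<le> (gf y - gf x) \<bullet> (y - x)"
  using convex_on_gradient_ineq[OF assms, of x y] convex_on_gradient_ineq[OF assms, of y x]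
  by (simp add: inner_diff_left inner_diff_right algebra_simps)

lemma has_derivative_mnorm2_shift:
  assumes "spd V"
  shows "((\<lambda>v. mnorm2 V (v - w)) has_derivative (\<lambda>d. 2 * ((V *v (x - w)) \<bullet> d))) (at x)"
proof -
  have shift: "((\<lambda>v. v - w) has_derivative (\<lambda>d. d)) (at x)"
    by (auto intro!: derivative_eq_intros)
  have "((\<lambda>v. V *v (v - w)) has_derivative (\<lambda>d. V *v d)) (at x)"
    by (rule bounded_linear.has_derivative[OF matrix_vector_mul_bounded_linear shift])
  from has_derivative_inner[OF this shift]
  have "((\<lambda>v. mnorm2 V (v - w)) has_derivative (\<lambda>d. (V *v (x - w)) \<bullet> d + (V *v d) \<bullet> (x - w))) (at x)"
    unfolding mnorm2_def .
  moreover have "(V *v d) \<bullet> (x - w) = (V *v (x - w)) \<bullet> d" for d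
    using spd_symmetric[OF assms, of d "x - w"] by (simp add: inner_commute)
  ultimately show ?thesis
    by simp
qed

lemma proximal_step_optimality:
  assumes grad: "is_gradient f gf" and V: "spd V" and a: "0 < a"
    and min: "\<forall>v. f u + 1/(2*a) * mnorm2 V (u - w) \<le> f v + 1/(2*a) * mnorm2 V (v - w)"
  shows "V *v (u - w) = - a *\<^sub>R gf u"
proof -
  have "((\<lambda>v. f v + 1/(2*a) * mnorm2 V (v - w)) has_derivative
      (\<lambda>d. gf u \<bullet> d + 1/(2*a) * (2 * ((V *v (u - w)) \<bullet> d)))) (at u)"
    using grad has_derivative_mnorm2_shift[OF V, of w u] a unfolding is_gradient_def
    by (auto intro!: derivative_eq_intros)
  then have stationary: "(\<lambda>d. gf u \<bullet> d + 1/(2*a) * (2 * ((V *v (u - w)) \<bullet> d))) = (\<lambda>d. 0)"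
    by (rule differential_zero_maxmin[OF UNIV_I open_UNIV]) (use min in auto)
  have "(gf u + (1/a) *\<^sub>R (V *v (u - w))) \<bullet> z = 0" for z
    using fun_cong[OF stationary, of z] by (simp add: inner_add_left)
  then have "gf u + (1/a) *\<^sub>R (V *v (u - w)) = 0"
    by (metis inner_eq_zero_iff)
  then have "a *\<^sub>R (gf u + (1/a) *\<^sub>R (V *v (u - w))) = 0"
    by simp
  then show ?thesis
    using a by (simp add: scaleR_add_right eq_neg_iff_add_eq_0 add.commute)
qed

section \<open>Generalised eigenvalues\<close>

lemma spd_orthogonal_independent:
  fixes Q :: "real^'n^'n"
  assumes Q: "spd Q" and nz: "0 \<notin> W"
    and orth: "\<And>v x. v \<in> W \<Longrightarrow> x \<in> W \<Longrightarrow> v \<noteq> x \<Longrightarrow> (Q *v v) \<bullet> x = 0"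
  shows "independent W"
  unfolding real_vector.independent_explicit_finite_subsets
proof (intro allI impI ballI)
  fix T u v
  assume T: "T \<subseteq> W" "finite T" and sum: "(\<Sum>v\<in>T. u v *\<^sub>R v) = 0" and "v \<in> T"
  then have "v \<noteq> 0"
    using nz by blast
  have "0 = (Q *v v) \<bullet> (\<Sum>x\<in>T. u x *\<^sub>R x)"
    using sum by simp
  also have "\<dots> = (\<Sum>x\<in>T. u x * ((Q *v v) \<bullet> x))"
    by (simp add: inner_sum_right)
  also have "\<dots> = u v * ((Q *v v) \<bullet> v) + (\<Sum>x\<in>T - {v}. u x * ((Q *v v) \<bullet> x))"
    by (rule sum.remove[OF T(2) \<open>v \<in> T\<close>])
  also have "(\<Sum>x\<in>T - {v}. u x * ((Q *v v) \<bullet> x)) = 0"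
  proof (rule sum.neutral, rule ballI)
    fix x assume "x \<in> T - {v}"
    then have "(Q *v v) \<bullet> x = 0"
      using orth T(1) \<open>v \<in> T\<close> by blast
    then show "u x * ((Q *v v) \<bullet> x) = 0" by simp
  qed
  finally have "u v * mnorm2 Q v = 0"
    unfolding mnorm2_def by simp
  moreover have "0 < mnorm2 Q v"
    using spd_mnorm2_pos[OF Q \<open>v \<noteq> 0\<close>] .
  ultimately show "u v = 0" by simp
qed

text \<open>Eigenvectors of Q^-1 S for distinct eigenvalues are Q-orthogonal, hence independent.\<close>
lemma finite_generalized_eigenvalues:
  fixes Q S :: "real^'n^'n"
  assumes Q: "spd Q" and S: "transpose S = S"
  shows "finite {c. \<exists>v. v \<noteq> 0 \<and> (matrix_inv Q ** S) *v v = c *\<^sub>R v}"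
proof -
  define Ev where "Ev = {c. \<exists>v. v \<noteq> 0 \<and> (matrix_inv Q ** S) *v v = c *\<^sub>R v}"
  define w where "w c = (SOME v. v \<noteq> 0 \<and> (matrix_inv Q ** S) *v v = c *\<^sub>R v)" for c
  have eig: "w c \<noteq> 0 \<and> (matrix_inv Q ** S) *v w c = c *\<^sub>R w c" if "c \<in> Ev" for c
    using someI_ex[of "\<lambda>v. v \<noteq> 0 \<and> (matrix_inv Q ** S) *v v = c *\<^sub>R v"] that
    unfolding w_def Ev_def by blast
  have inj: "inj_on w Ev"
  proof (rule inj_onI)
    fix c d assume c: "c \<in> Ev" and d: "d \<in> Ev" and "w c = w d"
    have "c *\<^sub>R w c = (matrix_inv Q ** S) *v w d"
      using eig[OF c] \<open>w c = w d\<close> by argo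
    also have "\<dots> = d *\<^sub>R w c"
      using eig[OF d] \<open>w c = w d\<close> by argo
    finally show "c = d"
      using eig[OF c] by simp
  qed
  have Sw: "S *v w c = c *\<^sub>R (Q *v w c)" if "c \<in> Ev" for c
  proof -
    have "S *v w c = Q *v ((matrix_inv Q ** S) *v w c)"
      by (simp add: spd_matrix_inv_cancel(1)[OF Q] flip: matrix_vector_mul_assoc)
    then show ?thesis
      using eig[OF that] by (simp add: matrix_vector_mult_scaleR)
  qed
  have orth: "(Q *v w c) \<bullet> w d = 0" if "c \<in> Ev" "d \<in> Ev" "c \<noteq> d" for c d
  proof -
    have "(S *v w c) \<bullet> w d = w c \<bullet> (S *v w d)"
      using S by (metis inner_matrix_vector_transpose)
    moreover have "w c \<bullet> (Q *v w d) = (Q *v w c) \<bullet> w d"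
      using spd_symmetric[OF Q, of "w c" "w d"] by simp
    ultimately have "(c - d) * ((Q *v w c) \<bullet> w d) = 0"
      unfolding Sw[OF that(1)] Sw[OF that(2)] by (simp add: algebra_simps)
    then show ?thesis using that(3) by simp
  qed
  have "independent (w ` Ev)"
  proof (rule spd_orthogonal_independent[OF Q])
    show "0 \<notin> w ` Ev"
      using eig by fastforce
    fix v x assume "v \<in> w ` Ev" "x \<in> w ` Ev" "v \<noteq> x"
    then show "(Q *v v) \<bullet> x = 0"
      using orth by blast
  qed
  then have "finite (w ` Ev)"
    using independent_bound by blast
  then have "finite Ev"
    using finite_imageD[OF _ inj] by blast
  then show ?thesis
    unfolding Ev_def .
qed

text \<open>If a negative semidefinite form vanishes at q, then q is in the kernel: otherwise the form
  would become positive at q + t M q for small t > 0.\<close>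
lemma nonpos_form_zero_imp_kernel:
  fixes M :: "real^'n^'n"
  assumes M: "transpose M = M" and nonpos: "\<And>x. (M *v x) \<bullet> x \<le> 0" and q: "(M *v q) \<bullet> q = 0"
  shows "M *v q = 0"
proof (rule ccontr)
  define d where "d = M *v q"
  define t where "t = (d \<bullet> d) / (\<bar>(M *v d) \<bullet> d\<bar> + 1)"
  assume "M *v q \<noteq> 0"
  then have "0 < d \<bullet> d" unfolding d_def by simp
  then have "0 < t" "t * \<bar>(M *v d) \<bullet> d\<bar> < d \<bullet> d"
    unfolding t_def by (simp_all add: field_simps)
  moreover have "- (t * ((M *v d) \<bullet> d)) \<le> t * \<bar>(M *v d) \<bullet> d\<bar>"
    using mult_left_mono[OF abs_ge_minus_self, of t "(M *v d) \<bullet> d"] \<open>0 < t\<close> by simp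
  ultimately have "0 < t * (2 * (d \<bullet> d) + t * ((M *v d) \<bullet> d))"
    using \<open>0 < d \<bullet> d\<close> by (intro mult_pos_pos) linarith+
  also have "\<dots> = (M *v (q + t *\<^sub>R d)) \<bullet> (q + t *\<^sub>R d)"
  proof -
    have "(M *v d) \<bullet> q = d \<bullet> d"
      using M unfolding d_def by (metis inner_commute inner_matrix_vector_transpose)
    then show ?thesis
      using q unfolding d_def
      by (simp add: matrix_vector_right_distrib matrix_vector_mult_scaleR inner_add_left
          inner_add_right algebra_simps power2_eq_square)
  qed
  finally show False
    using nonpos[of "q + t *\<^sub>R d"] by simp
qed

lemma generalized_rayleigh_quotient_max:
  fixes Q S :: "real^'n^'n"
  assumes Q: "spd Q"
  obtains q0 l where "q0 \<noteq> 0" "(S *v q0) \<bullet> q0 = l * mnorm2 Q q0"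
    "\<And>x. (S *v x) \<bullet> x \<le> l * mnorm2 Q x"
proof -
  define R where "R x = ((S *v x) \<bullet> x) / mnorm2 Q x" for x
  have "mnorm2 Q x \<noteq> 0" if "x \<in> sphere 0 1" for x
  proof -
    have "x \<noteq> 0" using that by auto
    then show ?thesis using spd_mnorm2_pos[OF Q] by (metis less_irrefl)
  qed
  then have "continuous_on (sphere 0 1) R"
    unfolding R_def mnorm2_def by (intro continuous_intros) auto
  moreover have "sphere (0::real^'n) 1 \<noteq> {}"
    by simp
  ultimately obtain q0 where q0: "q0 \<in> sphere (0::real^'n) 1" "\<And>y. y \<in> sphere 0 1 \<Longrightarrow> R y \<le> R q0"
    using continuous_attains_sup[OF compact_sphere, of 0 1 R] by blast
  have "(S *v x) \<bullet> x \<le> R q0 * mnorm2 Q x" for x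
  proof (cases "x = 0")
    case False
    have "R x = R ((1 / norm x) *\<^sub>R x)"
      unfolding R_def using False
      by (simp add: mnorm2_scaleR matrix_vector_mult_scaleR power2_eq_square field_simps)
    also have "\<dots> \<le> R q0"
      using False by (intro q0(2)) simp
    finally show ?thesis
      unfolding R_def using spd_mnorm2_pos[OF Q False] by (simp add: divide_le_eq)
  qed (simp add: mnorm2_def)
  moreover have "q0 \<noteq> 0"
    using q0(1) by auto
  moreover have "(S *v q0) \<bullet> q0 = R q0 * mnorm2 Q q0"
    unfolding R_def using spd_mnorm2_pos[OF Q \<open>q0 \<noteq> 0\<close>] by simp
  ultimately show ?thesis
    using that by blast
qed

lemma lambda_max_rayleigh_bound:
  fixes Q S :: "real^'n^'n"
  assumes Q: "spd Q" and S: "transpose S = S"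
  shows "(S *v x) \<bullet> x \<le> lambda_max (matrix_inv Q ** S) * mnorm2 Q x"
proof -
  obtain q0 l where q0: "q0 \<noteq> 0" "(S *v q0) \<bullet> q0 = l * mnorm2 Q q0"
    and bound: "\<And>x. (S *v x) \<bullet> x \<le> l * mnorm2 Q x"
    using generalized_rayleigh_quotient_max[OF Q] by blast
  have S_eq: "S *v v = Q *v ((matrix_inv Q ** S) *v v)" for v
    by (simp add: spd_matrix_inv_cancel(1)[OF Q] flip: matrix_vector_mul_assoc)
  define M where "M = S - l *\<^sub>R Q"
  have Mv: "M *v x = S *v x - l *\<^sub>R (Q *v x)" for x
    unfolding M_def by (simp add: matrix_vector_mult_diff_rdistrib scaleR_matrix_vector_assoc)
  have "transpose M = M"
    using S Q unfolding M_def spd_def by (simp add: transpose_def vec_eq_iff)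
  moreover have "(M *v x) \<bullet> x \<le> 0" for x
    using bound[of x] unfolding Mv mnorm2_def by (simp add: inner_diff_left)
  moreover have "(M *v q0) \<bullet> q0 = 0"
    using q0(2) unfolding Mv mnorm2_def by (simp add: inner_diff_left)
  ultimately have "M *v q0 = 0"
    by (rule nonpos_form_zero_imp_kernel)
  then have "(matrix_inv Q ** S) *v q0 = l *\<^sub>R q0"
    unfolding Mv by (simp add: matrix_vector_mult_scaleR spd_matrix_inv_cancel(2)[OF Q]
        flip: matrix_vector_mul_assoc)
  have "lambda_max (matrix_inv Q ** S) = l"
    unfolding lambda_max_def
  proof (rule Max_eqI)
    show "finite {c. \<exists>v. v \<noteq> 0 \<and> (matrix_inv Q ** S) *v v = c *\<^sub>R v}"
      by (rule finite_generalized_eigenvalues[OF Q S])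
    show "l \<in> {c. \<exists>v. v \<noteq> 0 \<and> (matrix_inv Q ** S) *v v = c *\<^sub>R v}"
      using \<open>(matrix_inv Q ** S) *v q0 = l *\<^sub>R q0\<close> q0(1) by blast
  next
    fix c assume "c \<in> {c. \<exists>v. v \<noteq> 0 \<and> (matrix_inv Q ** S) *v v = c *\<^sub>R v}"
    then obtain v where v: "v \<noteq> 0" "(matrix_inv Q ** S) *v v = c *\<^sub>R v" by blast
    then have "c * mnorm2 Q v \<le> l * mnorm2 Q v"
      using bound[of v] S_eq[of v] by (simp add: matrix_vector_mult_scaleR mnorm2_def)
    then show "c \<le> l"
      using spd_mnorm2_pos[OF Q v(1)] by simp
  qed
  then show ?thesis
    using bound by simp
qed

lemma congruence_dual_bound:
  fixes V :: "real^'m^'m" and Q :: "real^'n^'n" and B :: "real^'m^'n"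
  assumes V: "spd V" and Q: "spd Q" and l: "0 \<le> l"
    and rayleigh: "\<And>q. ((B ** matrix_inv V ** transpose B) *v q) \<bullet> q \<le> l * mnorm2 Q q"
  shows "mnorm2 (matrix_inv Q) (B *v w) \<le> l * mnorm2 V w"
proof -
  define z where "z = transpose B *v (matrix_inv Q *v (B *v w))"
  have X: "mnorm2 (matrix_inv Q) (B *v w) = z \<bullet> w"
    unfolding z_def mnorm2_def by (simp add: inner_matrix_vector_transpose inner_commute)
  have z_bound: "mnorm2 (matrix_inv V) z \<le> l * mnorm2 (matrix_inv Q) (B *v w)"
    using rayleigh[of "matrix_inv Q *v (B *v w)"]
    unfolding congruence_form_eq mnorm2_matrix_inv_cancel[OF Q] z_def .
  show ?thesis
  proof (cases "l = 0")
    case True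
    then have "z = 0"
      using z_bound spd_mnorm2_le_zero_iff[OF spd_inverse[OF V]] by simp
    then show ?thesis
      using X True by simp
  next
    case False
    have "2 * l * (z \<bullet> w) \<le> mnorm2 (matrix_inv V) z + l\<^sup>2 * mnorm2 V w"
      by (rule spd_dual_young[OF V])
    then have "l * (z \<bullet> w) \<le> l * (l * mnorm2 V w)"
      using z_bound unfolding X by (simp add: algebra_simps power2_eq_square)
    then show ?thesis
      using X False l by simp
  qed
qed

section \<open>One step of the IMEX scheme\<close>

declare transpose_matrix_vector [simp del]

locale imex_saddle_problem =
  fixes B :: "real^'m^'n"
    and f :: "real^'m \<Rightarrow> real" and gf :: "real^'m \<Rightarrow> real^'m"
    and h :: "real^'n \<Rightarrow> real" and gh :: "real^'n \<Rightarrow> real^'n"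
    and IV :: "real^'m^'m" and IQ :: "real^'n^'n"
    and ustar :: "real^'m" and pstar :: "real^'n"
    and mu_f L_f mu_hB L_hB L_e :: real
  assumes f_grad: "is_gradient f gf"
    and h_convex: "convex_on UNIV h" and h_grad: "is_gradient h gh"
    and saddle1: "gf ustar + transpose B *v pstar = 0"
    and saddle2: "B *v ustar = gh pstar"
    and IV_spd: "spd IV" and IQ_spd: "spd IQ"
    and f_S11: "S11 f gf mu_f L_f IV"
    and mu_f_pos: "0 < mu_f" and mu_f_le: "mu_f \<le> L_f" and L_f_lt: "L_f < 2"
    and e_lip: "\<forall>x y. mnorm IV ((x - matrix_inv IV *v gf x) - (y - matrix_inv IV *v gf y))
                        \<le> L_e * mnorm IV (x - y)"
    and mu_hB_pos: "0 < mu_hB"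
    and hB_S11: "S11 (\<lambda>q. h q + 1/2 * (((B ** matrix_inv IV ** transpose B) *v q) \<bullet> q))
                     (\<lambda>q. gh q + (B ** matrix_inv IV ** transpose B) *v q) mu_hB L_hB IQ"
begin

definition e :: "real^'m \<Rightarrow> real^'m" where
  "e x = x - matrix_inv IV *v gf x"

definition grad_hB :: "real^'n \<Rightarrow> real^'n" where
  "grad_hB q = gh q + (B ** matrix_inv IV ** transpose B) *v q"

text \<open>The p-update of the scheme moves along -IQ^-1 residual p_k u_k.\<close>
definition residual :: "real^'n \<Rightarrow> real^'m \<Rightarrow> real^'n" where
  "residual q v = grad_hB q - B *v e v"

definition energy :: "real^'m \<Rightarrow> real^'n \<Rightarrow> real" where
  "energy u p = 1/2 * mnorm2 IV (u - ustar) + 1/2 * mnorm2 IQ (p - pstar)"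

definition mu_Q :: real where
  "mu_Q = (2 - L_f) * mu_hB"

definition L_S2 :: real where
  "L_S2 = lambda_max (matrix_inv IQ ** B ** matrix_inv IV ** transpose B)"

definition L_SQ2 :: real where
  "L_SQ2 = L_hB\<^sup>2 + L_e\<^sup>2 * L_S2"

lemma L_f_pos: "0 < L_f"
  using mu_f_pos mu_f_le by linarith

lemma L_hB_pos: "0 < L_hB"
  using S11_mu_le_L[OF hB_S11 IQ_spd] mu_hB_pos by linarith

lemma mu_Q_pos: "0 < mu_Q"
  unfolding mu_Q_def using L_f_lt mu_hB_pos by simp

lemma rayleigh_L_S2: "((B ** matrix_inv IV ** transpose B) *v q) \<bullet> q \<le> L_S2 * mnorm2 IQ q"
proof -
  have "transpose (B ** matrix_inv IV ** transpose B) = B ** matrix_inv IV ** transpose B"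
    by (simp add: matrix_transpose_mul spd_transpose_matrix_inv[OF IV_spd] matrix_mul_assoc)
  from lambda_max_rayleigh_bound[OF IQ_spd this]
  show ?thesis
    unfolding L_S2_def by (simp add: matrix_mul_assoc)
qed

lemma L_S2_nonneg: "0 \<le> L_S2"
proof -
  obtain q :: "real^'n" where "q \<noteq> 0"
    using axis_eq_0_iff[of _ "1::real"] by blast
  have "0 \<le> L_S2 * mnorm2 IQ q"
    using rayleigh_L_S2[of q] spd_mnorm2_nonneg[OF spd_inverse[OF IV_spd]]
    unfolding congruence_form_eq by (meson order_trans)
  then show ?thesis
    using spd_mnorm2_pos[OF IQ_spd \<open>q \<noteq> 0\<close>] by (simp add: zero_le_mult_iff)
qed

lemma L_SQ2_pos: "0 < L_SQ2"
  unfolding L_SQ2_def using L_hB_pos L_S2_nonneg by (simp add: add_pos_nonneg)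

lemma e_lipschitz: "mnorm2 IV (e x - e y) \<le> L_e\<^sup>2 * mnorm2 IV (x - y)"
proof -
  have "sqrt (mnorm2 IV (e x - e y)) \<le> L_e * sqrt (mnorm2 IV (x - y))"
    using e_lip unfolding mnorm_def e_def by blast
  then have "(sqrt (mnorm2 IV (e x - e y)))\<^sup>2 \<le> (L_e * sqrt (mnorm2 IV (x - y)))\<^sup>2"
    using spd_mnorm2_nonneg[OF IV_spd] by (intro power_mono) auto
  then show ?thesis
    using spd_mnorm2_nonneg[OF IV_spd] by (simp add: power_mult_distrib)
qed

lemma residual_saddle: "residual pstar ustar = 0"
proof -
  have "0 = B *v (matrix_inv IV *v (gf ustar + transpose B *v pstar))"
    by (simp add: saddle1)
  also have "\<dots> = B *v (matrix_inv IV *v gf ustar) + (B ** matrix_inv IV ** transpose B) *v pstar"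
    by (simp add: matrix_vector_right_distrib matrix_vector_mul_assoc matrix_mul_assoc)
  finally show ?thesis
    unfolding residual_def grad_hB_def e_def
    by (simp add: saddle2 matrix_vector_mult_diff_distrib add.commute)
qed

lemma u_update_residual:
  assumes a: "0 < a"
    and u_upd: "\<forall>v. f u1 + 1/(2*a) * mnorm2 IV (u1 - u0 + a *\<^sub>R (matrix_inv IV *v (transpose B *v p1)))
                  \<le> f v + 1/(2*a) * mnorm2 IV (v - u0 + a *\<^sub>R (matrix_inv IV *v (transpose B *v p1)))"
  shows "IV *v (u1 - u0) = - a *\<^sub>R (gf u1 - gf ustar + transpose B *v (p1 - pstar))"
proof -
  define w where "w = u0 - a *\<^sub>R (matrix_inv IV *v (transpose B *v p1))"
  have "v - w = v - u0 + a *\<^sub>R (matrix_inv IV *v (transpose B *v p1))" for v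
    unfolding w_def by simp
  then have "\<forall>v. f u1 + 1/(2*a) * mnorm2 IV (u1 - w) \<le> f v + 1/(2*a) * mnorm2 IV (v - w)"
    using u_upd by presburger
  then have "IV *v (u1 - w) = - a *\<^sub>R gf u1"
    by (rule proximal_step_optimality[OF f_grad IV_spd a])
  moreover have "IV *v (u1 - w) = IV *v (u1 - u0) + a *\<^sub>R (transpose B *v p1)"
    unfolding w_def
    by (simp add: matrix_vector_mult_diff_distrib matrix_vector_mult_scaleR
        spd_matrix_inv_cancel(1)[OF IV_spd])
  moreover have "gf ustar = - (transpose B *v pstar)"
    using saddle1 by (simp add: eq_neg_iff_add_eq_0)
  ultimately show ?thesis
    by (simp add: matrix_vector_mult_diff_distrib algebra_simps)
qed

lemma p_update_residual:
  assumes "p1 = p0 - a *\<^sub>R (matrix_inv IQ *v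
             (gh p0 - B *v (u0 - matrix_inv IV *v (gf u0 + transpose B *v p0))))"
  shows "IQ *v (p1 - p0) = - a *\<^sub>R residual p0 u0"
proof -
  have "gh p0 - B *v (u0 - matrix_inv IV *v (gf u0 + transpose B *v p0)) = residual p0 u0"
    unfolding residual_def grad_hB_def e_def
    by (simp add: matrix_vector_mult_diff_distrib matrix_vector_right_distrib
        matrix_vector_mul_assoc matrix_mul_assoc)
  then show ?thesis
    using assms
    by (simp add: matrix_vector_mult_scaleR matrix_vector_mult_uminus spd_matrix_inv_cancel(1)[OF IQ_spd])
qed

lemma residual_expansion:
  "residual p0 u0 = (grad_hB p1 - grad_hB pstar) - B *v (e u1 - e ustar)
                    - (grad_hB p1 - grad_hB p0) + B *v (e u1 - e u0)"
  using residual_saddle unfolding residual_def by (simp add: matrix_vector_mult_diff_distrib)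

lemma energy_step_identity:
  assumes u_res: "IV *v (u1 - u0) = - a *\<^sub>R (gf u1 - gf ustar + transpose B *v (p1 - pstar))"
    and p_res: "IQ *v (p1 - p0) = - a *\<^sub>R residual p0 u0"
  shows "energy u1 p1 - energy u0 p0 =
     - a * ((gf u1 - gf ustar) \<bullet> (u1 - ustar)
            + (matrix_inv IV *v (gf u1 - gf ustar)) \<bullet> (transpose B *v (p1 - pstar)))
     - a * ((grad_hB p1 - grad_hB pstar) \<bullet> (p1 - pstar))
     + a * ((grad_hB p1 - grad_hB p0) \<bullet> (p1 - pstar))
     - a * ((B *v (e u1 - e u0)) \<bullet> (p1 - pstar))
     - mnorm2 IV (u1 - u0) / 2 - mnorm2 IQ (p1 - p0) / 2"
proof -
  define x1 y1 Df where "x1 = u1 - ustar" and "y1 = p1 - pstar" and "Df = gf u1 - gf ustar"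
  have shift: "x1 - (u1 - u0) = u0 - ustar" "y1 - (p1 - p0) = p0 - pstar"
    unfolding x1_def y1_def by simp_all
  have "mnorm2 IV x1 - mnorm2 IV (u0 - ustar) = 2 * ((IV *v (u1 - u0)) \<bullet> x1) - mnorm2 IV (u1 - u0)"
    using mnorm2_three_point[OF IV_spd, of x1 "u1 - u0"] unfolding shift(1) .
  moreover have "mnorm2 IQ y1 - mnorm2 IQ (p0 - pstar) = 2 * ((IQ *v (p1 - p0)) \<bullet> y1) - mnorm2 IQ (p1 - p0)"
    using mnorm2_three_point[OF IQ_spd, of y1 "p1 - p0"] unfolding shift(2) .
  ultimately have "energy u1 p1 - energy u0 p0 = (IV *v (u1 - u0)) \<bullet> x1 + (IQ *v (p1 - p0)) \<bullet> y1
               - mnorm2 IV (u1 - u0) / 2 - mnorm2 IQ (p1 - p0) / 2"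
    unfolding energy_def x1_def y1_def by simp
  moreover have "(IV *v (u1 - u0)) \<bullet> x1 = - a * (Df \<bullet> x1) - a * ((transpose B *v y1) \<bullet> x1)"
    unfolding u_res Df_def y1_def by (simp add: inner_add_left algebra_simps)
  moreover have "e u1 - e ustar = x1 - matrix_inv IV *v Df"
    unfolding e_def x1_def Df_def by (simp add: matrix_vector_mult_diff_distrib)
  then have "(B *v (e u1 - e ustar)) \<bullet> y1
               = (transpose B *v y1) \<bullet> x1 - (matrix_inv IV *v Df) \<bullet> (transpose B *v y1)"
    by (simp add: matrix_vector_mult_diff_distrib inner_diff_left
        inner_matrix_vector_transpose[of B] inner_commute[of "transpose B *v y1"])
  then have "(IQ *v (p1 - p0)) \<bullet> y1 = - a * ((grad_hB p1 - grad_hB pstar) \<bullet> y1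
               - (transpose B *v y1) \<bullet> x1 + (matrix_inv IV *v Df) \<bullet> (transpose B *v y1)
               - (grad_hB p1 - grad_hB p0) \<bullet> y1 + (B *v (e u1 - e u0)) \<bullet> y1)"
    unfolding p_res residual_expansion[of p0 u0 p1 u1]
    by (simp add: inner_diff_left inner_add_left)
  ultimately show ?thesis
    unfolding x1_def y1_def Df_def by (simp add: algebra_simps)
qed

text \<open>Since L_f < 2, the convexity of h lets the Schur part of the monotonicity of grad_hB
  absorb the term L_f/2 |B^T y|^2 left over from the primal estimate.\<close>
lemma grad_hB_monotone:
  "mu_Q/2 * mnorm2 IQ (p - pstar) + L_f/2 * mnorm2 (matrix_inv IV) (transpose B *v (p - pstar))
     \<le> (grad_hB p - grad_hB pstar) \<bullet> (p - pstar)"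
proof -
  define y H Hh Sy where "y = p - pstar" and "H = (grad_hB p - grad_hB pstar) \<bullet> y"
    and "Hh = (gh p - gh pstar) \<bullet> y" and "Sy = mnorm2 (matrix_inv IV) (transpose B *v y)"
  have "grad_hB p - grad_hB pstar = (gh p - gh pstar) + (B ** matrix_inv IV ** transpose B) *v y"
    unfolding grad_hB_def y_def by (simp add: matrix_vector_mult_diff_distrib)
  then have "H = Hh + Sy"
    unfolding H_def Hh_def Sy_def by (simp add: inner_add_left congruence_form_eq)
  have "mu_hB * mnorm2 IQ y \<le> H"
    using S11_strongly_monotone[OF hB_S11, of p pstar] unfolding H_def y_def grad_hB_def .
  have "mu_Q/2 * mnorm2 IQ y = (1 - L_f/2) * (mu_hB * mnorm2 IQ y)"
    unfolding mu_Q_def by (simp add: field_simps)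
  also have "\<dots> \<le> (1 - L_f/2) * H"
    using \<open>mu_hB * mnorm2 IQ y \<le> H\<close> L_f_lt by (intro mult_left_mono) auto
  also have "\<dots> = H - L_f/2 * Hh - L_f/2 * Sy"
    using \<open>H = Hh + Sy\<close> by (simp add: algebra_simps)
  also have "\<dots> \<le> H - L_f/2 * Sy"
    using L_f_pos convex_on_gradient_monotone[OF h_convex h_grad, of p pstar]
    unfolding Hh_def y_def by simp
  finally show ?thesis
    unfolding y_def[symmetric] H_def[symmetric] Sy_def[symmetric] by simp
qed

lemma grad_hB_perturbation:
  assumes "0 < a"
  shows "a * ((grad_hB p1 - grad_hB p0) \<bullet> y) \<le> mnorm2 IQ (p1 - p0) / 2 + a\<^sup>2 * L_hB\<^sup>2 / 2 * mnorm2 IQ y"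
proof (rule dual_pairing_le_of_dual_bound[OF IQ_spd assms])
  show "mnorm2 (matrix_inv IQ) (grad_hB p1 - grad_hB p0) \<le> L_hB\<^sup>2 * mnorm2 IQ (p1 - p0)"
    using S11_lipschitz_dual[OF hB_S11 IQ_spd _ L_hB_pos] mu_hB_pos unfolding grad_hB_def by simp
qed (simp_all add: spd_mnorm2_nonneg[OF IQ_spd])

lemma e_perturbation:
  assumes "0 < a"
  shows "a * ((B *v (e u0 - e u1)) \<bullet> y) \<le> mnorm2 IV (u1 - u0) / 2 + a\<^sup>2 * (L_e\<^sup>2 * L_S2) / 2 * mnorm2 IQ y"
proof -
  have "mnorm2 (matrix_inv IQ) (B *v (e u0 - e u1)) \<le> L_S2 * mnorm2 IV (e u0 - e u1)"
    by (rule congruence_dual_bound[OF IV_spd IQ_spd L_S2_nonneg rayleigh_L_S2])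
  also have "\<dots> \<le> L_S2 * (L_e\<^sup>2 * mnorm2 IV (u1 - u0))"
    using e_lipschitz[of u0 u1] L_S2_nonneg mnorm2_minus_commute[of IV u0 u1] by (simp add: mult_left_mono)
  finally have "mnorm2 (matrix_inv IQ) (B *v (e u0 - e u1)) \<le> L_e\<^sup>2 * L_S2 * mnorm2 IV (u1 - u0)"
    by (simp add: algebra_simps)
  from dual_pairing_le_of_dual_bound[OF IQ_spd assms _ _ this]
  show ?thesis
    using L_S2_nonneg spd_mnorm2_nonneg[OF IV_spd] by simp
qed

lemma energy_decrease:
  assumes a: "0 < a"
    and u_res: "IV *v (u1 - u0) = - a *\<^sub>R (gf u1 - gf ustar + transpose B *v (p1 - pstar))"
    and p_res: "IQ *v (p1 - p0) = - a *\<^sub>R residual p0 u0"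
  shows "energy u1 p1 + a * mu_f / 2 * mnorm2 IV (u1 - ustar)
           + a * (mu_Q - a * L_SQ2) / 2 * mnorm2 IQ (p1 - pstar) \<le> energy u0 p0"
proof -
  define y Ex Ey Sy where "y = p1 - pstar" and "Ex = mnorm2 IV (u1 - ustar)" and "Ey = mnorm2 IQ y"
    and "Sy = mnorm2 (matrix_inv IV) (transpose B *v y)"
  define P H X W where
    "P = (gf u1 - gf ustar) \<bullet> (u1 - ustar) + (matrix_inv IV *v (gf u1 - gf ustar)) \<bullet> (transpose B *v y)"
    and "H = (grad_hB p1 - grad_hB pstar) \<bullet> y" and "X = (grad_hB p1 - grad_hB p0) \<bullet> y"
    and "W = (B *v (e u1 - e u0)) \<bullet> y"
  have identity: "energy u1 p1 - energy u0 p0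
      = - a * P - a * H + a * X - a * W - mnorm2 IV (u1 - u0) / 2 - mnorm2 IQ (p1 - p0) / 2"
    using energy_step_identity[OF u_res p_res] unfolding P_def H_def X_def W_def y_def .
  have "mu_f/2 * Ex - L_f/2 * Sy \<le> P"
    unfolding Ex_def Sy_def P_def by (rule S11_perturbed_monotone[OF f_S11 IV_spd _ L_f_pos]) (use mu_f_pos in simp)
  moreover have "mu_Q/2 * Ey + L_f/2 * Sy \<le> H"
    unfolding Ey_def Sy_def H_def y_def by (rule grad_hB_monotone)
  ultimately have "a * (mu_f/2 * Ex + mu_Q/2 * Ey) \<le> a * (P + H)"
    using a by (intro mult_left_mono) auto
  moreover have "a * (mu_f/2 * Ex + mu_Q/2 * Ey) = a * mu_f / 2 * Ex + a * mu_Q / 2 * Ey"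
    and "a * (P + H) = a * P + a * H"
    by (simp_all add: algebra_simps)
  moreover have "a * (mu_Q - a * L_SQ2) / 2 * Ey
      = a * mu_Q / 2 * Ey - a\<^sup>2 * L_hB\<^sup>2 / 2 * Ey - a\<^sup>2 * (L_e\<^sup>2 * L_S2) / 2 * Ey"
    unfolding L_SQ2_def by (simp add: field_simps power2_eq_square)
  moreover have "a * X \<le> mnorm2 IQ (p1 - p0) / 2 + a\<^sup>2 * L_hB\<^sup>2 / 2 * Ey"
    unfolding X_def Ey_def by (rule grad_hB_perturbation[OF a])
  moreover have "- (a * W) \<le> mnorm2 IV (u1 - u0) / 2 + a\<^sup>2 * (L_e\<^sup>2 * L_S2) / 2 * Ey"
    using e_perturbation[OF a, of u0 u1 y]
    unfolding W_def Ey_def by (simp add: matrix_vector_mult_diff_distrib inner_diff_left algebra_simps)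
  ultimately show ?thesis
    using identity unfolding Ex_def Ey_def y_def by linarith
qed

theorem imex_step_contraction:
  assumes a: "0 < a" "a < mu_Q / L_SQ2"
    and p_upd: "p1 = p0 - a *\<^sub>R (matrix_inv IQ *v
                  (gh p0 - B *v (u0 - matrix_inv IV *v (gf u0 + transpose B *v p0))))"
    and u_upd: "\<forall>v. f u1 + 1/(2*a) * mnorm2 IV (u1 - u0 + a *\<^sub>R (matrix_inv IV *v (transpose B *v p1)))
                  \<le> f v + 1/(2*a) * mnorm2 IV (v - u0 + a *\<^sub>R (matrix_inv IV *v (transpose B *v p1)))"
  shows "energy u1 p1 \<le> 1 / (1 + a * min mu_f (mu_Q - a * L_SQ2)) * energy u0 p0"
proof -
  define mu where "mu = min mu_f (mu_Q - a * L_SQ2)"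
  have "0 < mu"
    using a L_SQ2_pos mu_f_pos unfolding mu_def by (simp add: field_simps)
  have "a * mu / 2 * mnorm2 IV (u1 - ustar) \<le> a * mu_f / 2 * mnorm2 IV (u1 - ustar)"
    and "a * mu / 2 * mnorm2 IQ (p1 - pstar) \<le> a * (mu_Q - a * L_SQ2) / 2 * mnorm2 IQ (p1 - pstar)"
    using a spd_mnorm2_nonneg[OF IV_spd] spd_mnorm2_nonneg[OF IQ_spd] unfolding mu_def
    by (intro mult_right_mono divide_right_mono mult_left_mono; simp)+
  moreover have "energy u1 p1 * (1 + a * mu)
      = energy u1 p1 + a * mu / 2 * mnorm2 IV (u1 - ustar) + a * mu / 2 * mnorm2 IQ (p1 - pstar)"
    unfolding energy_def by (simp add: field_simps)
  ultimately have "energy u1 p1 * (1 + a * mu) \<le> energy u0 p0"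
    using energy_decrease[OF a(1) u_update_residual[OF a(1) u_upd] p_update_residual[OF p_upd]]
    by linarith
  moreover have "0 < 1 + a * mu"
    using a \<open>0 < mu\<close> by (simp add: add_pos_pos)
  ultimately show ?thesis
    unfolding mu_def[symmetric] by (simp add: field_simps)
qed

corollary imex_step_contraction_half_step:
  assumes a: "a = 0.5 * mu_Q / L_SQ2"
    and p_upd: "p1 = p0 - a *\<^sub>R (matrix_inv IQ *v
                  (gh p0 - B *v (u0 - matrix_inv IV *v (gf u0 + transpose B *v p0))))"
    and u_upd: "\<forall>v. f u1 + 1/(2*a) * mnorm2 IV (u1 - u0 + a *\<^sub>R (matrix_inv IV *v (transpose B *v p1)))
                  \<le> f v + 1/(2*a) * mnorm2 IV (v - u0 + a *\<^sub>R (matrix_inv IV *v (transpose B *v p1)))"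
  shows "energy u1 p1 \<le> 1 / (1 + 0.5 * mu_Q * min mu_f (mu_Q / 2) / L_SQ2) * energy u0 p0"
proof -
  have "0 < a"
    unfolding a using mu_Q_pos L_SQ2_pos by simp
  moreover have "a < mu_Q / L_SQ2"
    unfolding a using mu_Q_pos L_SQ2_pos by (simp add: field_simps)
  moreover have "mu_Q - a * L_SQ2 = mu_Q / 2"
    and "a * min mu_f (mu_Q / 2) = 0.5 * mu_Q * min mu_f (mu_Q / 2) / L_SQ2"
    using a L_SQ2_pos by simp_all
  ultimately show ?thesis
    using imex_step_contraction[OF _ _ p_upd u_upd] by simp
qed

end

theorem theorem4p3:
  fixes B :: "real^'m^'n"
    and f :: "real^'m \<Rightarrow> real" and gf :: "real^'m \<Rightarrow> real^'m"
    and h :: "real^'n \<Rightarrow> real" and gh :: "real^'n \<Rightarrow> real^'n"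
    and IV :: "real^'m^'m" and IQ :: "real^'n^'n"
    and ustar :: "real^'m" and pstar :: "real^'n"
    and u :: "nat \<Rightarrow> real^'m" and p :: "nat \<Rightarrow> real^'n" and \<alpha> :: "nat \<Rightarrow> real"
    and mu_f L_f mu_hB L_hB L_e :: real
  assumes mn: "CARD('n) \<le> CARD('m)"
    and rankB: "rank B = CARD('n)"
    and f_convex: "convex_on UNIV f" and f_grad: "is_gradient f gf"
    and gf_cont: "continuous_on UNIV gf" and gf_lip: "lipschitz_grad gf"
    and h_convex: "convex_on UNIV h" and h_grad: "is_gradient h gh"
    and gh_cont: "continuous_on UNIV gh" and gh_lip: "lipschitz_grad gh"
    and saddle1: "gf ustar + transpose B *v pstar = 0"
    and saddle2: "B *v ustar = gh pstar"
    and IV_spd: "spd IV" and IQ_spd: "spd IQ"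
    and f_S11: "S11 f gf mu_f L_f IV"
    and mu_f_pos: "0 < mu_f" and mu_f_le: "mu_f \<le> L_f" and L_f_lt: "L_f < 2"
    and e_lip: "\<forall>x y. mnorm IV ((x - matrix_inv IV *v gf x) - (y - matrix_inv IV *v gf y))
                        \<le> L_e * mnorm IV (x - y)"
    and mu_hB_pos: "0 < mu_hB"
    and hB_S11: "S11 (\<lambda>q. h q + 1/2 * (((B ** matrix_inv IV ** transpose B) *v q) \<bullet> q))
                     (\<lambda>q. gh q + (B ** matrix_inv IV ** transpose B) *v q) mu_hB L_hB IQ"
    and p_step: "\<forall>k. 0 < \<alpha> k \<longrightarrow> p (Suc k) = p k - \<alpha> k *\<^sub>R (matrix_inv IQ *v
                   (gh (p k) - B *v (u k - matrix_inv IV *v (gf (u k) + transpose B *v p k))))"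
    and u_step: "\<forall>k. 0 < \<alpha> k \<longrightarrow> (\<forall>v. f (u (Suc k)) + 1 / (2 * \<alpha> k) *
                   mnorm2 IV (u (Suc k) - u k + \<alpha> k *\<^sub>R (matrix_inv IV *v (transpose B *v p (Suc k))))
                 \<le> f v + 1 / (2 * \<alpha> k) *
                   mnorm2 IV (v - u k + \<alpha> k *\<^sub>R (matrix_inv IV *v (transpose B *v p (Suc k)))))"
  shows "let mu_V = mu_f;
             mu_Q = (2 - L_f) * mu_hB;
             L_S2 = lambda_max (matrix_inv IQ ** B ** matrix_inv IV ** transpose B);
             L_SQ2 = L_hB\<^sup>2 + L_e\<^sup>2 * L_S2;
             E = (\<lambda>k. 1/2 * mnorm2 IV (u k - ustar) + 1/2 * mnorm2 IQ (p k - pstar))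
         in (\<forall>k. 0 < \<alpha> k \<and> \<alpha> k < mu_Q / L_SQ2 \<longrightarrow>
                 E (Suc k) \<le> 1 / (1 + \<alpha> k * min mu_V (mu_Q - \<alpha> k * L_SQ2)) * E k)
          \<and> (\<forall>k. \<alpha> k = 0.5 * mu_Q / L_SQ2 \<longrightarrow>
                 E (Suc k) \<le> 1 / (1 + 0.5 * mu_Q * min mu_V (mu_Q / 2) / L_SQ2) * E k)"
proof -
  interpret imex_saddle_problem B f gf h gh IV IQ ustar pstar mu_f L_f mu_hB L_hB L_e
    by unfold_locales (fact assms)+
  have "energy (u (Suc k)) (p (Suc k))
          \<le> 1 / (1 + \<alpha> k * min mu_f (mu_Q - \<alpha> k * L_SQ2)) * energy (u k) (p k)"
    if "0 < \<alpha> k" "\<alpha> k < mu_Q / L_SQ2" for k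
    using imex_step_contraction[OF that] p_step u_step that(1) by blast
  moreover have "energy (u (Suc k)) (p (Suc k))
          \<le> 1 / (1 + 0.5 * mu_Q * min mu_f (mu_Q / 2) / L_SQ2) * energy (u k) (p k)"
    if "\<alpha> k = 0.5 * mu_Q / L_SQ2" for k
  proof -
    have "0 < \<alpha> k"
      using that mu_Q_pos L_SQ2_pos by simp
    then show ?thesis
      using imex_step_contraction_half_step[OF that] p_step u_step by blast
  qed
  ultimately show ?thesis
    unfolding Let_def energy_def mu_Q_def L_SQ2_def L_S2_def by blast
qed

end
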